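(* $M^L(5)=8$.
   Context: $\mathbb{F}=\{0,1\}$. The binary $n$-dimensional hypercube $\mathbb{F}^n$ is the graph on $\mathbb{F}^n$ where two words are adjacent iff their Hamming distance is $1$. For a nonempty $C\subseteq\mathbb{F}^n$, $I(\mathbf{x})=N[\mathbf{x}]\cap C$ with $N[\mathbf{x}]$ the words at Hamming distance $\le1$ from $\mathbf{x}$. $C$ is a local identifying code if $I(\mathbf{x})\ne\emptyset$ for all $\mathbf{x}$ and $I(\mathbf{x})\ne I(\mathbf{y})$ for all adjacent $\mathbf{x},\mathbf{y}$. $M^L(n)$ is the minimum cardinality of a local identifying code in $\mathbb{F}^n$. *)

theory Defs
  imports Main
begin

definition words :: "nat \<Rightarrow> bool list set" where
  "words n = {x. length x = n}"

definition hamming :: "bool list \<Rightarrow> bool list \<Rightarrow> nat" where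
  "hamming x y = card {i. i < length x \<and> x ! i \<noteq> y ! i}"

definition closed_nbhd :: "nat \<Rightarrow> bool list \<Rightarrow> bool list set" where
  "closed_nbhd n x = {y \<in> words n. hamming x y \<le> 1}"

definition I_set :: "nat \<Rightarrow> bool list set \<Rightarrow> bool list \<Rightarrow> bool list set" where
  "I_set n C x = closed_nbhd n x \<inter> C"

definition local_identifying_code :: "nat \<Rightarrow> bool list set \<Rightarrow> bool" where
  "local_identifying_code n C \<longleftrightarrow>
     C \<subseteq> words n \<and> C \<noteq> {} \<and>
     (\<forall>x \<in> words n. I_set n C x \<noteq> {}) \<and>
     (\<forall>x \<in> words n. \<forall>y \<in> words n. hamming x y = 1 \<longrightarrow> I_set n C x \<noteq> I_set n C y)"

definition M_L :: "nat \<Rightarrow> nat" where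
  "M_L n = (LEAST k. \<exists>C. local_identifying_code n C \<and> card C = k)"

end

theory Submission
  imports Defs
begin

(*
  The hypercube is bipartite between words of even and odd weight, 16 of each when n = 5.
  Let d x be the number of codewords adjacent to x. Summed over one parity class, d counts
  every codeword of the other class 5 times. A word with d x = 0 must itself be a codeword
  (its identifying set is nonempty), and then each of its 5 neighbours y has d y \<ge> 2,
  for otherwise the identifying sets of x and y would both be {x}. Hence
  16 + #{d \<ge> 2} \<le> 5 |C \<inter> other class| + #{d = 0} in each class, and a small case
  analysis on whether such isolated codewords occur gives |C| \<ge> 8. A code of size 8 is
  checked exhaustively.
*)

definition flip :: "bool list \<Rightarrow> nat \<Rightarrow> bool list" where
  "flip x i = x[i := \<not> x ! i]"

definition neighbours :: "bool list \<Rightarrow> bool list set" where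
  "neighbours x = flip x ` {..<length x}"

definition even_weight :: "bool list \<Rightarrow> bool" where
  "even_weight x \<longleftrightarrow> even (length (filter id x))"

lemma length_flip [simp]: "length (flip x i) = length x"
  by (simp add: flip_def)

lemma flip_flip [simp]: "flip (flip x i) i = x"
  by (cases "i < length x") (simp_all add: flip_def list_update_beyond nth_list_update)

lemma flip_neq: "i < length x \<Longrightarrow> flip x i \<noteq> x"
  by (metis flip_def length_list_update nth_list_update_eq)

lemma flip_inj: "inj_on (flip x) {..<length x}"
  by (rule inj_onI) (metis flip_def lessThan_iff nth_list_update)

lemma even_weight_flip:
  "i < length x \<Longrightarrow> even_weight (flip x i) \<longleftrightarrow> \<not> even_weight x"
proof (induction x arbitrary: i)
  case (Cons a x)
  then show ?case
    by (cases i) (auto simp: flip_def even_weight_def)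
qed simp

lemma length_neighbour: "y \<in> neighbours x \<Longrightarrow> length y = length x"
  by (auto simp: neighbours_def)

lemma not_in_neighbours: "x \<notin> neighbours x"
  by (auto simp: neighbours_def dest: flip_neq)

lemma neighbours_sym:
  assumes "y \<in> neighbours x"
  shows "x \<in> neighbours y"
proof -
  obtain i where "i < length x" "y = flip x i"
    using assms by (auto simp: neighbours_def)
  then show ?thesis
    by (auto simp: neighbours_def intro!: image_eqI[of _ _ i])
qed

lemma card_neighbours: "card (neighbours x) = length x"
  by (simp add: neighbours_def card_image flip_inj)

lemma even_weight_neighbour: "y \<in> neighbours x \<Longrightarrow> even_weight y \<longleftrightarrow> \<not> even_weight x"
  by (auto simp: neighbours_def even_weight_flip)

lemma hamming_eq_0_iff: "length y = length x \<Longrightarrow> hamming x y = 0 \<longleftrightarrow> y = x"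
  by (auto simp: hamming_def intro: nth_equalityI)

lemma differences_eq_singleton_iff:
  assumes "length y = length x"
  shows "{j. j < length x \<and> x ! j \<noteq> y ! j} = {i} \<longleftrightarrow> i < length x \<and> y = flip x i"
proof
  assume D: "{j. j < length x \<and> x ! j \<noteq> y ! j} = {i}"
  then have "i < length x" by auto
  moreover have "y = flip x i"
  proof (rule nth_equalityI)
    fix j assume "j < length y"
    then show "y ! j = flip x i ! j"
      using D assms by (cases "j = i") (auto simp: flip_def)
  qed (use assms in simp)
  ultimately show "i < length x \<and> y = flip x i" ..
qed (auto simp: flip_def nth_list_update)

lemma hamming_eq_1_iff:
  assumes "length y = length x"
  shows "hamming x y = 1 \<longleftrightarrow> y \<in> neighbours x"
  unfolding hamming_def One_nat_def card_1_singleton_iff differences_eq_singleton_iff[OF assms]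
  by (auto simp: neighbours_def)

lemma closed_nbhd_eq: "x \<in> words n \<Longrightarrow> closed_nbhd n x = insert x (neighbours x)"
proof -
  have "hamming x y \<le> 1 \<longleftrightarrow> y = x \<or> y \<in> neighbours x" if "length y = length x" for y
    using hamming_eq_0_iff[OF that] hamming_eq_1_iff[OF that] not_in_neighbours by auto
  then show "x \<in> words n \<Longrightarrow> ?thesis"
    by (auto simp: closed_nbhd_def words_def length_neighbour)
qed

lemma words_eq_lists: "words n = {xs. set xs \<subseteq> UNIV \<and> length xs = n}"
  by (simp add: words_def)

lemma finite_words: "finite (words n)"
  unfolding words_eq_lists by (rule finite_lists_length_eq) simp

lemma card_words: "card (words n) = 2 ^ n"
  unfolding words_eq_lists by (subst card_lists_length_eq) simp_all

lemma neighbour_in_words: "x \<in> words n \<Longrightarrow> y \<in> neighbours x \<Longrightarrow> y \<in> words n"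
  by (simp add: words_def length_neighbour)

definition parity_class :: "nat \<Rightarrow> bool \<Rightarrow> bool list set" where
  "parity_class n b = {x \<in> words n. even_weight x = b}"

lemma card_parity_class: "card (parity_class (Suc n) b) = 2 ^ n"
proof -
  have "bij_betw (\<lambda>x. flip x 0) (parity_class (Suc n) b) (parity_class (Suc n) (\<not> b))"
    by (rule bij_betw_byWitness[where f' = "\<lambda>x. flip x 0"])
      (auto simp: parity_class_def words_def even_weight_flip)
  then have same: "card (parity_class (Suc n) b) = card (parity_class (Suc n) (\<not> b))"
    by (rule bij_betw_same_card)
  have "words (Suc n) = parity_class (Suc n) b \<union> parity_class (Suc n) (\<not> b)"
    by (auto simp: parity_class_def)
  then have "2 ^ Suc n = card (parity_class (Suc n) b) + card (parity_class (Suc n) (\<not> b))"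
    using finite_words[of "Suc n"]
    by (subst card_Un_disjoint[symmetric]) (auto simp: card_words parity_class_def)
  then show ?thesis
    using same by simp
qed

definition code_degree :: "bool list set \<Rightarrow> bool list \<Rightarrow> nat" where
  "code_degree C x = card (neighbours x \<inter> C)"

lemma code_degree_eq_0_iff: "code_degree C x = 0 \<longleftrightarrow> neighbours x \<inter> C = {}"
  by (simp add: code_degree_def neighbours_def)

lemma I_set_eq: "x \<in> words n \<Longrightarrow> I_set n C x = insert x (neighbours x) \<inter> C"
  by (simp add: I_set_def closed_nbhd_eq)

lemma local_identifying_code_mem_if_no_neighbour:
  assumes "local_identifying_code n C" "x \<in> words n" "neighbours x \<inter> C = {}"
  shows "x \<in> C"
  using assms by (auto simp: local_identifying_code_def I_set_eq)

lemma local_identifying_code_two_le_code_degree: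
  assumes code: "local_identifying_code n C"
    and x: "x \<in> words n" "neighbours x \<inter> C = {}"
    and y: "y \<in> neighbours x"
  shows "2 \<le> code_degree C y"
proof (rule ccontr)
  assume "\<not> 2 \<le> code_degree C y"
  then have le1: "card (neighbours y \<inter> C) \<le> 1"
    by (simp add: code_degree_def)
  have xC: "x \<in> C"
    using local_identifying_code_mem_if_no_neighbour[OF code x] .
  have "finite (neighbours y \<inter> C)"
    by (simp add: neighbours_def)
  then have "neighbours y \<inter> C = {x}"
    using le1 xC neighbours_sym[OF y] by (auto simp: card_le_Suc0_iff_eq)
  moreover have yw: "y \<in> words n"
    using neighbour_in_words[OF x(1) y] .
  moreover have "y \<notin> C"
    using x(2) y by blast
  ultimately have "I_set n C x = I_set n C y"
    using x xC by (auto simp: I_set_eq)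
  moreover have "hamming x y = 1"
    using hamming_eq_1_iff[OF length_neighbour[OF y]] y by simp
  ultimately show False
    using code x(1) yw unfolding local_identifying_code_def by blast
qed

lemma neighbours_in_parity_class:
  assumes "c \<in> words n"
  shows "{x \<in> parity_class n b. c \<in> neighbours x} = (if even_weight c \<noteq> b then neighbours c else {})"
proof -
  have "x \<in> parity_class n b \<and> c \<in> neighbours x \<longleftrightarrow> x \<in> neighbours c \<and> even_weight c \<noteq> b" for x
    using neighbours_sym[of c x] neighbours_sym[of x c] neighbour_in_words[OF assms, of x]
      even_weight_neighbour[of x c]
    by (auto simp: parity_class_def)
  then show ?thesis
    by auto
qed

lemma sum_code_degree_parity_class:
  assumes C: "C \<subseteq> words n"
  shows "(\<Sum>x\<in>parity_class n b. code_degree C x) = n * card {c \<in> C. even_weight c \<noteq> b}"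
proof -
  have fin: "finite C" "finite (parity_class n b)"
    using C finite_words finite_subset by (auto simp: parity_class_def)
  have "(\<Sum>x\<in>parity_class n b. code_degree C x)
      = (\<Sum>x\<in>parity_class n b. \<Sum>c\<in>C. of_bool (c \<in> neighbours x))"
    using fin by (simp add: code_degree_def Int_commute Int_def)
  also have "\<dots> = (\<Sum>c\<in>C. \<Sum>x\<in>parity_class n b. of_bool (c \<in> neighbours x))"
    by (rule sum.swap)
  also have "\<dots> = (\<Sum>c\<in>C. n * of_bool (even_weight c \<noteq> b))"
  proof (rule sum.cong [OF refl])
    fix c assume "c \<in> C"
    then have c: "c \<in> words n" using C by blast
    have "(\<Sum>x\<in>parity_class n b. of_bool (c \<in> neighbours x))
        = card {x \<in> parity_class n b. c \<in> neighbours x}"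
      using fin by (simp add: Int_def)
    also have "\<dots> = n * of_bool (even_weight c \<noteq> b)"
      using c by (simp add: neighbours_in_parity_class card_neighbours words_def)
    finally show "(\<Sum>x\<in>parity_class n b. of_bool (c \<in> neighbours x)) = n * of_bool (even_weight c \<noteq> b)" .
  qed
  also have "\<dots> = n * card {c \<in> C. even_weight c \<noteq> b}"
    using fin by (simp add: sum_distrib_left[symmetric] Int_def conj_commute)
  finally show ?thesis .
qed

lemma card_plus_card_ge_2_le_sum:
  fixes s :: "'a \<Rightarrow> nat"
  assumes "finite E"
  shows "card E + card {x \<in> E. 2 \<le> s x} \<le> sum s E + card {x \<in> E. s x = 0}"
proof -
  have "card E + card {x \<in> E. 2 \<le> s x} = (\<Sum>x\<in>E. 1 + of_bool (2 \<le> s x))"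
    using assms by (subst sum.distrib) (simp add: Int_def)
  also have "\<dots> \<le> (\<Sum>x\<in>E. s x + of_bool (s x = 0))"
    by (rule sum_mono) auto
  also have "\<dots> = sum s E + card {x \<in> E. s x = 0}"
    using assms by (simp add: sum.distrib Int_def)
  finally show ?thesis .
qed

lemma parity_class_degree_bound:
  assumes "C \<subseteq> words n"
  shows "card (parity_class n b) + card {x \<in> parity_class n b. 2 \<le> code_degree C x}
    \<le> n * card {c \<in> C. even_weight c \<noteq> b} + card {x \<in> parity_class n b. code_degree C x = 0}"
  using card_plus_card_ge_2_le_sum[of "parity_class n b" "code_degree C"]
    sum_code_degree_parity_class[OF assms, of b] finite_words
  by (simp add: parity_class_def)

lemma card_degree_0_le:
  assumes code: "local_identifying_code n C"
  shows "card {x \<in> parity_class n b. code_degree C x = 0} \<le> card {c \<in> C. even_weight c = b}"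
proof (rule card_mono)
  have "finite C"
    using code finite_words[of n] by (meson local_identifying_code_def finite_subset)
  then show "finite {c \<in> C. even_weight c = b}"
    by simp
  show "{x \<in> parity_class n b. code_degree C x = 0} \<subseteq> {c \<in> C. even_weight c = b}"
    using local_identifying_code_mem_if_no_neighbour[OF code]
    by (auto simp: parity_class_def code_degree_eq_0_iff)
qed

lemma card_degree_ge_2_if_degree_0:
  assumes code: "local_identifying_code n C"
    and z: "z \<in> parity_class n (\<not> b)" "code_degree C z = 0"
  shows "n \<le> card {x \<in> parity_class n b. 2 \<le> code_degree C x}"
proof -
  have zw: "z \<in> words n" and "even_weight z = (\<not> b)" and zC: "neighbours z \<inter> C = {}"
    using z by (auto simp: parity_class_def code_degree_eq_0_iff)
  then have "neighbours z \<subseteq> {x \<in> parity_class n b. 2 \<le> code_degree C x}"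
    using neighbour_in_words[OF zw] even_weight_neighbour[of _ z]
      local_identifying_code_two_le_code_degree[OF code zw zC]
    by (auto simp: parity_class_def)
  moreover have "card (neighbours z) = n"
    using zw by (simp add: card_neighbours words_def)
  moreover have "finite {x \<in> parity_class n b. 2 \<le> code_degree C x}"
    using finite_words by (simp add: parity_class_def)
  ultimately show ?thesis
    by (metis card_mono)
qed

lemma words_eq_set_n_lists: "words n = set (List.n_lists n [True, False])"
  by (auto simp: words_def set_n_lists)

lemma neighbours_length_5: "length x = 5 \<Longrightarrow> neighbours x = set (map (flip x) [0, 1, 2, 3, 4])"
proof -
  have "{..<5::nat} = {0, 1, 2, 3, 4}"
    by auto
  then show "length x = 5 \<Longrightarrow> ?thesis"
    by (simp add: neighbours_def)
qed

text \<open>The four words \<open>**000\<close> and their complements.\<close>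

definition code8 :: "bool list set" where
  "code8 = set
    [[False, False, False, False, False], [True, False, False, False, False],
     [False, True, False, False, False], [True, True, False, False, False],
     [False, False, True, True, True], [True, False, True, True, True],
     [False, True, True, True, True], [True, True, True, True, True]]"

lemma code8_dominating: "\<forall>x \<in> words 5. insert x (neighbours x) \<inter> code8 \<noteq> {}"
  by (simp add: words_eq_set_n_lists neighbours_length_5 numeral_eq_Suc code8_def flip_def)

lemma code8_separating:
  "\<forall>x \<in> words 5. \<forall>y \<in> neighbours x.
     \<exists>c \<in> code8. (c \<in> insert x (neighbours x)) \<noteq> (c \<in> insert y (neighbours y))"
  by (simp add: words_eq_set_n_lists neighbours_length_5 numeral_eq_Suc code8_def flip_def)

lemma local_identifying_code_code8: "local_identifying_code 5 code8"
  unfolding local_identifying_code_def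
proof (intro conjI ballI impI)
  show "code8 \<subseteq> words 5" "code8 \<noteq> {}"
    by (auto simp: code8_def words_def)
  show "I_set 5 code8 x \<noteq> {}" if "x \<in> words 5" for x
    using code8_dominating that by (simp add: I_set_eq)
  show "I_set 5 code8 x \<noteq> I_set 5 code8 y"
    if x: "x \<in> words 5" and y: "y \<in> words 5" and "hamming x y = 1" for x y
  proof -
    have "length y = length x"
      using x y by (simp add: words_def)
    then have "y \<in> neighbours x"
      using hamming_eq_1_iff \<open>hamming x y = 1\<close> by blast
    then show ?thesis
      using code8_separating x y by (fastforce simp: I_set_eq)
  qed
qed

lemma card_code8: "card code8 = 8"
  by (simp add: code8_def)

text \<open>\<open>a\<close>, \<open>b\<close> count even and odd codewords, \<open>x\<close>, \<open>y\<close> the isolated ones among them.\<close>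

lemma eight_le_add_if_parity_bounds:
  fixes a b x y :: nat
  assumes "16 \<le> 5 * b + x" "y \<noteq> 0 \<Longrightarrow> 21 \<le> 5 * b + x" "x \<le> a"
    and "16 \<le> 5 * a + y" "x \<noteq> 0 \<Longrightarrow> 21 \<le> 5 * a + y" "y \<le> b"
  shows "8 \<le> a + b"
  using assms by (cases "x = 0"; cases "y = 0"; simp; presburger)

lemma local_identifying_code_5_card_ge_8:
  assumes code: "local_identifying_code 5 C"
  shows "8 \<le> card C"
proof -
  define p where "p b = card {c \<in> C. even_weight c = b}" for b
  define Z where "Z b = card {x \<in> parity_class 5 b. code_degree C x = 0}" for b
  define T where "T b = card {x \<in> parity_class 5 b. 2 \<le> code_degree C x}" for b
  have C: "C \<subseteq> words 5"
    using code by (simp add: local_identifying_code_def)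
  have bound: "16 + T b \<le> 5 * p (\<not> b) + Z b" for b
    using parity_class_degree_bound[OF C, of b] card_parity_class[of 4 b]
    by (simp add: p_def T_def Z_def)
  have isolated: "Z b \<le> p b" for b
    unfolding Z_def p_def by (rule card_degree_0_le[OF code])
  have crowded: "5 \<le> T b" if "Z (\<not> b) \<noteq> 0" for b
  proof -
    have "{x \<in> parity_class 5 (\<not> b). code_degree C x = 0} \<noteq> {}"
      using that unfolding Z_def by (metis card.empty)
    then obtain z where "z \<in> parity_class 5 (\<not> b)" "code_degree C z = 0"
      by blast
    then show ?thesis
      unfolding T_def using card_degree_ge_2_if_degree_0[OF code] by blast
  qed
  have split: "card C = p True + p False"
  proof -
    have "finite C"
      using C finite_words finite_subset by blast
    moreover have "C = {c \<in> C. even_weight c} \<union> {c \<in> C. \<not> even_weight c}"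
      by auto
    ultimately show ?thesis
      unfolding p_def by (metis (no_types, lifting) card_Un_disjoint disjoint_iff finite_Un mem_Collect_eq)
  qed
  have "8 \<le> p True + p False"
  proof (rule eight_le_add_if_parity_bounds)
    show "16 \<le> 5 * p False + Z True" "16 \<le> 5 * p True + Z False"
      using bound[of True] bound[of False] by simp_all
    show "21 \<le> 5 * p False + Z True" if "Z False \<noteq> 0"
      using bound[of True] crowded[of True] that by simp
    show "21 \<le> 5 * p True + Z False" if "Z True \<noteq> 0"
      using bound[of False] crowded[of False] that by simp
  qed (rule isolated)+
  with split show ?thesis
    by simp
qed

theorem mainTheorem11:
  shows "M_L 5 = 8"
  unfolding M_L_def
proof (rule Least_equality)
  show "\<exists>C. local_identifying_code 5 C \<and> card C = 8"
    using local_identifying_code_code8 card_code8 by blast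
  show "8 \<le> k" if "\<exists>C. local_identifying_code 5 C \<and> card C = k" for k
    using that local_identifying_code_5_card_ge_8 by blast
qed

end
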